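(* Let $(A,\mathfrak{m})$ be a local ring and let $A\subset B$ be an integral extension of rings. Let $R(B)$ denote the Jacobson radical of $B$, and set $A' = A + R(B)\subset B$ and $\mathfrak{m}' = R(B)$. For each maximal ideal $\mathfrak{n}_i$ of $B$ let $\omega_i\colon A/\mathfrak{m}\to B/\mathfrak{n}_i$ be the canonical homomorphism. Then: (1) $(A',\mathfrak{m}')$ is a local ring and the canonical homomorphism $A/\mathfrak{m}\to A'/\mathfrak{m}'$ is an isomorphism; (2) $A'$ is the largest intermediate local ring with this property: if $C$ is a ring with $A\subset C\subset B$ which is local with maximal ideal $\mathfrak{n}$ and $A/\mathfrak{m}\cong C/\mathfrak{n}$ (via the canonical map), then $C\subset A'$; (3) an element $b\in B$ lies in $A'$ if and only if (a) for every maximal ideal $\mathfrak{n}_i$ of $B$, the image $b(x_i)$ of $b$ in $B/\mathfrak{n}_i$ lies in $\omega_i(A/\mathfrak{m})$, and (b) $\omega_i^{-1}(b(x_i)) = \omega_j^{-1}(b(x_j))$ for all $i,j$.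
   Context: All rings are commutative with identity. For a maximal ideal $\mathfrak{n}_i$ of $B$ corresponding to a closed point $x_i\in\mathrm{Spec}(B)$, $b(x_i)$ denotes the image of $b$ in the residue field $B/\mathfrak{n}_i$. *)

theory Defs
  imports "HOL-Algebra.Algebra"
begin

definition local_ring_with :: "('a, 'b) ring_scheme \<Rightarrow> 'a set \<Rightarrow> bool" where
  "local_ring_with R m \<longleftrightarrow> cring R \<and> maximalideal m R \<and>
     (\<forall>n. maximalideal n R \<longrightarrow> n = m)"

text \<open>b is integral over the subring A of R: root of a monic polynomial with
  coefficients in A (lists, leading coefficient first, as in HOL-Algebra.Polynomials).\<close>
definition integral_over :: "('a, 'b) ring_scheme \<Rightarrow> 'a set \<Rightarrow> 'a \<Rightarrow> bool" where
  "integral_over R A b \<longleftrightarrow>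
     (\<exists>p. p \<noteq> [] \<and> set p \<subseteq> A \<and> hd p = \<one>\<^bsub>R\<^esub> \<and> ring.eval R p b = \<zero>\<^bsub>R\<^esub>)"

definition integral_extension :: "('a, 'b) ring_scheme \<Rightarrow> 'a set \<Rightarrow> bool" where
  "integral_extension R A \<longleftrightarrow> subring A R \<and> (\<forall>b \<in> carrier R. integral_over R A b)"

definition jacobson_radical :: "('a, 'b) ring_scheme \<Rightarrow> 'a set" where
  "jacobson_radical R = carrier R \<inter> \<Inter> {n. maximalideal n R}"

text \<open>The canonical map between residue rings of subrings of R, sending the coset
  I + a to the coset J + a (for I \<subseteq> J): on cosets it is Y \<mapsto> J + Y.\<close>
definition res_map :: "('a, 'b) ring_scheme \<Rightarrow> 'a set \<Rightarrow> 'a set \<Rightarrow> 'a set" where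
  "res_map R J Y = set_add R J Y"

end

theory Submission
  imports Defs
begin

text \<open>In an integral extension maximal ideals contract to maximal ideals, so every maximal ideal
  of \<open>B\<close> contracts to \<open>m\<close> and so \<open>A \<inter> R(B) = m\<close>. An element \<open>a + r\<close> of \<open>A' = A + R(B)\<close>
  with \<open>a \<notin> m\<close> is a unit of \<open>A'\<close>, hence \<open>A'\<close> is local with maximal ideal \<open>R(B)\<close>, and
  \<open>A/m \<cong> A'/R(B)\<close> is the second isomorphism theorem. If \<open>A \<subseteq> C \<subseteq> B\<close> is local with the same
  residue field, every element of \<open>C\<close> is congruent to an element of \<open>A\<close> modulo the maximal ideal
  \<open>n\<close> of \<open>C\<close>, and \<open>n \<subseteq> R(B)\<close> since every maximal ideal of \<open>B\<close> contracts to \<open>n\<close>; so \<open>C \<subseteq> A'\<close>.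
  Finally \<open>b \<in> A'\<close> iff \<open>b\<close> is congruent to one and the same \<open>a \<in> A\<close> modulo every maximal ideal
  of \<open>B\<close>, which is condition (3).\<close>

no_notation Sum_Type.Plus (infixr \<open><+>\<close> 65)

lemma (in ring) ideal_subset_maximalideal:
  assumes "ideal I R" "\<one> \<notin> I"
  shows "\<exists>M. maximalideal M R \<and> I \<subseteq> M"
proof -
  define S where "S = {J. ideal J R \<and> I \<subseteq> J \<and> \<one> \<notin> J}"
  have "\<exists>M\<in>S. \<forall>J\<in>S. M \<subseteq> J \<longrightarrow> J = M"
  proof (rule subset_Zorn_nonempty)
    show "S \<noteq> {}" using assms S_def by blast
  next
    fix C assume C: "C \<noteq> {}" "subset.chain S C"
    then have "subset.chain {J. ideal J R} C"
      unfolding pred_on.chain_def S_def by auto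
    with C(1) have "ideal (\<Union>C) R" using chain_Union_is_ideal[of C] by simp
    moreover have "I \<subseteq> \<Union>C" "\<one> \<notin> \<Union>C"
      using C unfolding pred_on.chain_def S_def by blast+
    ultimately show "\<Union>C \<in> S" unfolding S_def by blast
  qed
  then obtain M where M: "M \<in> S" and M_max: "\<And>J. J \<in> S \<Longrightarrow> M \<subseteq> J \<Longrightarrow> J = M" by blast
  have "maximalideal M R"
  proof (rule maximalidealI)
    show "ideal M R" "carrier R \<noteq> M" using M S_def by blast+
    fix J assume J: "ideal J R" "M \<subseteq> J" "J \<subseteq> carrier R"
    show "J = M \<or> J = carrier R"
    proof (cases "\<one> \<in> J")
      case True then show ?thesis using ideal.one_imp_carrier[OF J(1)] by blast
    next
      case False then show ?thesis using J M M_max[of J] unfolding S_def by blast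
    qed
  qed
  then show ?thesis using M S_def by blast
qed

lemma (in cring) nonunit_mem_maximalideal:
  assumes "x \<in> carrier R" "x \<notin> Units R"
  shows "\<exists>M. maximalideal M R \<and> x \<in> M"
proof -
  have "\<one> \<notin> PIdl x"
  proof
    assume "\<one> \<in> PIdl x"
    then obtain y where "y \<in> carrier R" "\<one> = y \<otimes> x" unfolding cgenideal_def by blast
    then show False using assms m_comm unfolding Units_def by auto
  qed
  then show ?thesis
    using ideal_subset_maximalideal[OF cgenideal_ideal] cgenideal_self assms(1) by blast
qed

lemma local_ring_with_nonmember_unit:
  assumes "local_ring_with S m" "a \<in> carrier S" "a \<notin> m"
  shows "a \<in> Units S"
proof (rule ccontr)
  assume "a \<notin> Units S"
  moreover have "cring S" using assms(1) unfolding local_ring_with_def by (rule conjunct1)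
  ultimately obtain M where "maximalideal M S" "a \<in> M"
    using cring.nonunit_mem_maximalideal[of S a] assms(2) by blast
  moreover have "\<forall>M. maximalideal M S \<longrightarrow> M = m"
    using assms(1) unfolding local_ring_with_def by (elim conjE)
  ultimately show False using assms(3) by blast
qed

lemma (in ring) ideal_inter_subring:
  assumes "ideal I R" "subring S R"
  shows "ideal (I \<inter> S) (R\<lparr>carrier := S\<rparr>)"
proof -
  have "ring_hom_ring (R\<lparr>carrier := S\<rparr>) R id"
  proof (rule ring_hom_ringI2)
    show "ring (R\<lparr>carrier := S\<rparr>)" by (rule subring_is_ring[OF assms(2)])
    show "id \<in> ring_hom (R\<lparr>carrier := S\<rparr>) R"
      by (rule ring_hom_memI) (use subringE(1)[OF assms(2)] in auto)
  qed (rule ring_axioms)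
  from ring_hom_ring.ideal_vimage[OF this assms(1)]
  have "ideal {r \<in> S. r \<in> I} (R\<lparr>carrier := S\<rparr>)" by simp
  moreover have "{r \<in> S. r \<in> I} = I \<inter> S" by blast
  ultimately show ?thesis by simp
qed

lemma (in ring) ideal_subring_eq_if_unit:
  assumes "subring T R" "ideal J (R\<lparr>carrier := T\<rparr>)" "x \<in> J" "y \<in> T" "x \<otimes> y = \<one>"
  shows "J = T"
proof -
  have "\<one> \<in> J" using ideal.I_r_closed[OF assms(2,3), of y] assms(4,5) by simp
  then show ?thesis using ideal.one_imp_carrier[OF assms(2)] by simp
qed

lemma (in cring) local_ring_with_subringI:
  assumes T: "subring T R" and J: "ideal J (R\<lparr>carrier := T\<rparr>)" and "\<one> \<notin> J"
    and units: "\<And>x. x \<in> T \<Longrightarrow> x \<notin> J \<Longrightarrow> \<exists>y\<in>T. x \<otimes> y = \<one>"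
  shows "local_ring_with (R\<lparr>carrier := T\<rparr>) J"
proof -
  have ideal_sub: "M \<subseteq> T" if "ideal M (R\<lparr>carrier := T\<rparr>)" for M
    using additive_subgroup.a_subset[OF ideal.axioms(1)[OF that]] by simp
  have proper_sub: "M \<subseteq> J" if M: "ideal M (R\<lparr>carrier := T\<rparr>)" "M \<noteq> T" for M
  proof
    fix x assume x: "x \<in> M"
    show "x \<in> J"
    proof (rule ccontr)
      assume "x \<notin> J"
      then obtain y where "y \<in> T" "x \<otimes> y = \<one>" using units x ideal_sub[OF M(1)] by blast
      then show False using ideal_subring_eq_if_unit[OF T M(1) x] M(2) by blast
    qed
  qed
  have J_proper: "J \<noteq> T" using \<open>\<one> \<notin> J\<close> subringE(3)[OF T] by blast
  have max: "maximalideal J (R\<lparr>carrier := T\<rparr>)"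
  proof (rule maximalidealI)
    show "carrier (R\<lparr>carrier := T\<rparr>) \<noteq> J" using J_proper by simp
    fix M assume M: "ideal M (R\<lparr>carrier := T\<rparr>)" "J \<subseteq> M"
    show "M = J \<or> M = carrier (R\<lparr>carrier := T\<rparr>)"
      using proper_sub[OF M(1)] M(2) by auto
  qed (fact J)
  have unique: "M = J" if "maximalideal M (R\<lparr>carrier := T\<rparr>)" for M
  proof -
    interpret M: maximalideal M "R\<lparr>carrier := T\<rparr>" by (fact that)
    have "M \<subseteq> J" using proper_sub[OF M.is_ideal] M.I_notcarr by force
    then have "J = M \<or> J = T" using M.I_maximal[OF J] ideal_sub[OF J] by simp
    then show ?thesis using J_proper by blast
  qed
  have "cring (R\<lparr>carrier := T\<rparr>)"
    using subcring_iff[OF subringE(1)[OF T]] subcringI'[OF T] by blast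
  with max unique show ?thesis unfolding local_ring_with_def by blast
qed

lemma a_r_coset_carrier_update [simp]: "a_r_coset (R\<lparr>carrier := S\<rparr>) = a_r_coset R"
  by (simp add: a_r_coset_def' fun_eq_iff)

lemma set_add_carrier_update [simp]: "set_add (R\<lparr>carrier := S\<rparr>) = set_add R"
  by (simp add: set_add_def' fun_eq_iff)

lemma carrier_FactRing_carrier_update:
  "carrier (R\<lparr>carrier := S\<rparr> Quot I) = a_r_coset R I ` S"
  by (auto simp: FactRing_def A_RCOSETS_def')

lemma one_FactRing_carrier_update: "\<one>\<^bsub>R\<lparr>carrier := S\<rparr> Quot I\<^esub> = I +>\<^bsub>R\<^esub> \<one>\<^bsub>R\<^esub>"
  by (simp add: FactRing_def)

lemma zero_FactRing: "\<zero>\<^bsub>R Quot I\<^esub> = I"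
  by (simp add: FactRing_def)

lemma (in ring) subring_rcos_ring_hom:
  assumes "subring S R" "ideal I (R\<lparr>carrier := S\<rparr>)"
  shows "a_r_coset R I \<in> ring_hom (R\<lparr>carrier := S\<rparr>) (R\<lparr>carrier := S\<rparr> Quot I)"
  using ideal.rcos_ring_hom[OF assms(2)] by simp

lemma (in ring) subring_a_inv:
  assumes "subring S R" "x \<in> S"
  shows "\<ominus>\<^bsub>R\<lparr>carrier := S\<rparr>\<^esub> x = \<ominus> x"
proof -
  interpret S: ring "R\<lparr>carrier := S\<rparr>" by (rule subring_is_ring[OF assms(1)])
  let ?y = "\<ominus>\<^bsub>R\<lparr>carrier := S\<rparr>\<^esub> x"
  have y: "?y \<in> carrier R" "x \<oplus> ?y = \<zero>"
    using S.a_inv_closed S.r_neg assms subringE(1)[OF assms(1)] by auto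
  have x: "x \<in> carrier R" using assms subringE(1)[OF assms(1)] by auto
  have "?y = (\<ominus> x \<oplus> x) \<oplus> ?y" using x y l_neg by simp
  also have "\<dots> = \<ominus> x" using x y by (simp add: a_assoc)
  finally show ?thesis .
qed

lemma (in ring) subring_rcos_eq_iff:
  assumes "subring S R" "ideal I (R\<lparr>carrier := S\<rparr>)" "x \<in> S" "y \<in> S"
  shows "I +> x = I +> y \<longleftrightarrow> x \<ominus> y \<in> I"
proof -
  interpret S: ring "R\<lparr>carrier := S\<rparr>" by (rule subring_is_ring[OF assms(1)])
  show ?thesis
    using S.quotient_eq_iff_same_a_r_cos[OF assms(2), of x y] assms(3,4)
      subring_a_inv[OF assms(1,4)] by (simp add: a_minus_def)
qed

lemma (in ring) subring_set_add_ideal: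
  assumes "subring S R" "ideal I R"
  shows "subring (S <+> I) R"
proof -
  interpret I: ideal I R by fact
  note S = subringE[OF assms(1)]
  have carr: "s \<in> carrier R" "i \<in> carrier R" if "s \<in> S" "i \<in> I" for s i
    using that S(1) I.Icarr by auto
  show ?thesis
  proof (rule subringI)
    show "S <+> I \<subseteq> carrier R" using carr by (auto simp: set_add_def')
    show "\<one> \<in> S <+> I" using S(3) I.zero_closed r_zero[OF one_closed]
      unfolding set_add_def' by blast
  next
    fix x assume "x \<in> S <+> I"
    then obtain s i where si: "s \<in> S" "i \<in> I" "x = s \<oplus> i" by (auto simp: set_add_def')
    then have "\<ominus> x = \<ominus> s \<oplus> \<ominus> i" using carr by (simp add: minus_add)
    then show "\<ominus> x \<in> S <+> I" using S(5) si I.a_inv_closed unfolding set_add_def' by blast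
  next
    fix x y assume "x \<in> S <+> I" "y \<in> S <+> I"
    then obtain s i s' i' where si: "s \<in> S" "i \<in> I" "x = s \<oplus> i" "s' \<in> S" "i' \<in> I" "y = s' \<oplus> i'"
      by (auto simp: set_add_def')
    have "x \<otimes> y = s \<otimes> s' \<oplus> (s \<otimes> i' \<oplus> i \<otimes> s' \<oplus> i \<otimes> i')"
      using si carr by (simp add: l_distr r_distr a_ac)
    moreover have "s \<otimes> i' \<oplus> i \<otimes> s' \<oplus> i \<otimes> i' \<in> I"
      using si carr I.I_l_closed I.I_r_closed by simp
    ultimately show "x \<otimes> y \<in> S <+> I" using S(6) si unfolding set_add_def' by blast
    have "x \<oplus> y = (s \<oplus> s') \<oplus> (i \<oplus> i')" using si carr by (simp add: a_ac)
    then show "x \<oplus> y \<in> S <+> I" using S(7) si I.a_closed unfolding set_add_def' by blast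
  qed
qed

lemma (in ring) res_map_rcos:
  assumes "ideal J R" "I \<subseteq> J" "\<zero> \<in> I" "a \<in> carrier R"
  shows "res_map R J (I +> a) = J +> a"
proof -
  interpret J: ideal J R by fact
  show ?thesis
  proof (rule equalityI; rule subsetI)
    fix x assume "x \<in> res_map R J (I +> a)"
    then obtain i j where "i \<in> J" "j \<in> I" "x = i \<oplus> (j \<oplus> a)"
      by (auto simp: res_map_def set_add_def' a_r_coset_def')
    moreover have "i \<oplus> (j \<oplus> a) = (i \<oplus> j) \<oplus> a" "i \<oplus> j \<in> J"
      using calculation assms J.Icarr by (auto simp: a_assoc)
    ultimately show "x \<in> J +> a" by (auto simp: a_r_coset_def')
  next
    fix x assume "x \<in> J +> a"
    then obtain i where "i \<in> J" "x = i \<oplus> (\<zero> \<oplus> a)" using assms(4) by (auto simp: a_r_coset_def')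
    then show "x \<in> res_map R J (I +> a)"
      using assms(3) by (auto simp: res_map_def set_add_def' a_r_coset_def')
  qed
qed

lemma (in ring) res_map_inter_rcos:
  assumes "ideal J R" "subring S R" "a \<in> S"
  shows "res_map R J ((S \<inter> J) +> a) = J +> a"
  using res_map_rcos[OF assms(1)] subringE(1,2)[OF assms(2)] assms(3)
    additive_subgroup.zero_closed[OF ideal.axioms(1)[OF assms(1)]] by blast

lemma (in ring) ideal_subring_inter:
  assumes "ideal J R" "subring S R"
  shows "ideal (S \<inter> J) (R\<lparr>carrier := S\<rparr>)"
  using ideal_inter_subring[OF assms] by (simp add: Int_commute)

lemma (in ring) res_map_inj_on:
  assumes S: "subring S R" and J: "ideal J R"
  shows "inj_on (res_map R J) (carrier (R\<lparr>carrier := S\<rparr> Quot (S \<inter> J)))"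
proof (rule inj_onI)
  fix U W assume "U \<in> carrier (R\<lparr>carrier := S\<rparr> Quot (S \<inter> J))"
    "W \<in> carrier (R\<lparr>carrier := S\<rparr> Quot (S \<inter> J))" and eq: "res_map R J U = res_map R J W"
  then obtain a b where ab: "a \<in> S" "U = (S \<inter> J) +> a" "b \<in> S" "W = (S \<inter> J) +> b"
    unfolding carrier_FactRing_carrier_update by blast
  have "J +> a = J +> b" using eq ab res_map_inter_rcos[OF J S] by simp
  then have "a \<ominus> b \<in> J"
    using quotient_eq_iff_same_a_r_cos[OF J] ab subringE(1)[OF S] by blast
  moreover have "a \<ominus> b \<in> S" unfolding a_minus_def using ab subringE(5,7)[OF S] by blast
  ultimately show "U = W"
    using subring_rcos_eq_iff[OF S ideal_subring_inter[OF J S] ab(1,3)] ab by blast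
qed

lemma (in ring) res_map_ring_iso:
  assumes S: "subring S R" and J: "ideal J R"
  shows "res_map R J \<in> ring_iso (R\<lparr>carrier := S\<rparr> Quot (S \<inter> J)) (R\<lparr>carrier := S <+> J\<rparr> Quot J)"
proof -
  interpret J: ideal J R by fact
  let ?T = "S <+> J"
  have T: "subring ?T R" by (rule subring_set_add_ideal[OF S J])
  have S_carr: "S \<subseteq> carrier R" by (rule subringE(1)[OF S])
  have S_T: "S \<subseteq> ?T" and J_T: "J \<subseteq> ?T"
    using subringE(2)[OF S] J.zero_closed S_carr J.Icarr unfolding set_add_def'
    by (force intro: r_zero[symmetric], force intro: l_zero[symmetric])
  have JT: "ideal J (R\<lparr>carrier := ?T\<rparr>)"
    using ideal_inter_subring[OF J T] J_T by (simp add: Int_absorb2)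
  note h = res_map_inter_rcos[OF J S]
  note rcos_S = subring_rcos_ring_hom[OF S ideal_subring_inter[OF J S]]
  note rcos_T = subring_rcos_ring_hom[OF T JT]
  note carr = carrier_FactRing_carrier_update
  have hom: "res_map R J \<in> ring_hom (R\<lparr>carrier := S\<rparr> Quot (S \<inter> J)) (R\<lparr>carrier := ?T\<rparr> Quot J)"
  proof (rule ring_hom_memI)
    fix U assume "U \<in> carrier (R\<lparr>carrier := S\<rparr> Quot (S \<inter> J))"
    then obtain a where "a \<in> S" "U = (S \<inter> J) +> a" unfolding carr by blast
    then show "res_map R J U \<in> carrier (R\<lparr>carrier := ?T\<rparr> Quot J)" using h S_T unfolding carr by blast
  next
    fix U W assume "U \<in> carrier (R\<lparr>carrier := S\<rparr> Quot (S \<inter> J))"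
      "W \<in> carrier (R\<lparr>carrier := S\<rparr> Quot (S \<inter> J))"
    then obtain a b where ab: "a \<in> S" "U = (S \<inter> J) +> a" "b \<in> S" "W = (S \<inter> J) +> b"
      unfolding carr by blast
    have abS': "a \<in> carrier (R\<lparr>carrier := S\<rparr>)" "b \<in> carrier (R\<lparr>carrier := S\<rparr>)"
      using ab by auto
    have abT: "a \<in> carrier (R\<lparr>carrier := ?T\<rparr>)" "b \<in> carrier (R\<lparr>carrier := ?T\<rparr>)"
      using ab S_T by auto
    have abS: "a \<otimes> b \<in> S" "a \<oplus> b \<in> S" using ab subringE(6,7)[OF S] by auto
    show "res_map R J (U \<otimes>\<^bsub>R\<lparr>carrier := S\<rparr> Quot (S \<inter> J)\<^esub> W)
        = res_map R J U \<otimes>\<^bsub>R\<lparr>carrier := ?T\<rparr> Quot J\<^esub> res_map R J W"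
      using ring_hom_mult[OF rcos_S abS', symmetric] ring_hom_mult[OF rcos_T abT, symmetric]
        h ab abS by simp
    show "res_map R J (U \<oplus>\<^bsub>R\<lparr>carrier := S\<rparr> Quot (S \<inter> J)\<^esub> W)
        = res_map R J U \<oplus>\<^bsub>R\<lparr>carrier := ?T\<rparr> Quot J\<^esub> res_map R J W"
      using ring_hom_add[OF rcos_S abS', symmetric] ring_hom_add[OF rcos_T abT, symmetric]
        h ab abS by simp
  next
    show "res_map R J \<one>\<^bsub>R\<lparr>carrier := S\<rparr> Quot (S \<inter> J)\<^esub> = \<one>\<^bsub>R\<lparr>carrier := ?T\<rparr> Quot J\<^esub>"
      using h[OF subringE(3)[OF S]] by (simp add: one_FactRing_carrier_update)
  qed
  have "carrier (R\<lparr>carrier := ?T\<rparr> Quot J) \<subseteq> res_map R J ` carrier (R\<lparr>carrier := S\<rparr> Quot (S \<inter> J))"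
  proof
    fix Z assume "Z \<in> carrier (R\<lparr>carrier := ?T\<rparr> Quot J)"
    then obtain s j where sj: "s \<in> S" "j \<in> J" "Z = J +> (s \<oplus> j)"
      unfolding carr set_add_def' by blast
    have s_j: "s \<in> carrier R" "j \<in> carrier R" using sj S_carr J.Icarr by auto
    then have "(s \<oplus> j) \<ominus> s = j" by (simp add: a_minus_def) algebra
    then have "J +> (s \<oplus> j) = J +> s"
      using quotient_eq_iff_same_a_r_cos[OF J, of "s \<oplus> j" s] sj(2) s_j by simp
    then have "Z = res_map R J ((S \<inter> J) +> s)" using sj h by simp
    then show "Z \<in> res_map R J ` carrier (R\<lparr>carrier := S\<rparr> Quot (S \<inter> J))"
      using sj(1) unfolding carr by blast
  qed
  then have "bij_betw (res_map R J) (carrier (R\<lparr>carrier := S\<rparr> Quot (S \<inter> J))) (carrier (R\<lparr>carrier := ?T\<rparr> Quot J))"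
    using res_map_inj_on[OF S J] ring_hom_closed[OF hom] unfolding bij_betw_def by blast
  with hom show ?thesis unfolding ring_iso_def by blast
qed

lemma integral_over_mono:
  "integral_over R A b \<Longrightarrow> A \<subseteq> C \<Longrightarrow> integral_over R C b"
  unfolding integral_over_def by blast

lemma (in ring) eval_in_subring:
  assumes "subring S R" "set p \<subseteq> S" "x \<in> S"
  shows "eval p x \<in> S"
  using ring.eval_in_carrier[OF subring_is_ring[OF assms(1)], of p x] assms by simp

lemma (in cring) pow_length_mult_eval:
  assumes x: "x \<in> carrier R" and y: "y \<in> carrier R" and xy: "x \<otimes> y = \<one>"
    and "set p \<subseteq> carrier R"
  shows "x [^] length p \<otimes> eval p y = x \<otimes> eval (rev p) x"
  using assms(4)
proof (induction p)
  case Nil then show ?case using x by simp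
next
  case (Cons c p)
  let ?L = "length p"
  have c: "c \<in> carrier R" and p: "set p \<subseteq> carrier R" using Cons.prems by auto
  have carr: "eval p y \<in> carrier R" "eval (rev p) x \<in> carrier R"
    using eval_in_carrier p x y by auto
  have "x [^] ?L \<otimes> y [^] ?L = \<one>" using nat_pow_distrib[OF x y, of ?L] xy by simp
  then have "x [^] length (c # p) \<otimes> eval (c # p) y = x \<otimes> (c \<oplus> x [^] ?L \<otimes> eval p y)"
    using c carr x y by (simp add: m_ac r_distr)
  also have "\<dots> = x \<otimes> (eval (rev p) x \<otimes> x \<oplus> c)"
    using Cons.IH[OF p] c carr x by (simp add: a_comm m_comm)
  also have "\<dots> = x \<otimes> eval (rev (c # p)) x"
    using eval_append_aux[of "rev p" c x] p c x by simp
  finally show ?case .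
qed

text \<open>If \<open>y\<close> inverts \<open>a\<close> modulo \<open>N\<close> and \<open>y\<^sup>n + c\<^sub>1 y\<^sup>n\<^sup>-\<^sup>1 + \<dots> + c\<^sub>n = 0\<close> with \<open>c\<^sub>i \<in> S\<close>,
  then multiplying by \<open>a\<^sup>n\<^sup>+\<^sup>1\<close> and cancelling \<open>a\<close> in the field \<open>R/N\<close> gives
  \<open>1 + c\<^sub>1 a + \<dots> + c\<^sub>n a\<^sup>n \<in> N\<close>, so an inverse of \<open>a\<close> modulo \<open>N\<close> can be taken in \<open>S\<close>.\<close>
lemma (in cring) integral_inverse_mod_maximalideal:
  assumes S: "subring S R" and int: "\<And>b. b \<in> carrier R \<Longrightarrow> integral_over R S b"
    and N: "maximalideal N R" and a: "a \<in> S" "a \<notin> N"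
  shows "\<exists>a'\<in>S. a \<otimes> a' \<ominus> \<one> \<in> N"
proof -
  interpret N: maximalideal N R by fact
  interpret K: field "R Quot N" by (rule N.quotient_is_field[OF is_cring])
  interpret h: ring_hom_ring R "R Quot N" "(+>) N" by (rule N.rcos_ring_hom_ring)
  have S_carr: "S \<subseteq> carrier R" by (rule subringE(1)[OF S])
  have a_carr: "a \<in> carrier R" using a(1) S_carr by blast
  note zero = zero_FactRing[of R N]
  have ha: "N +> a \<in> carrier (R Quot N)" by (rule h.hom_closed[OF a_carr])
  have a_nz: "N +> a \<noteq> N" using N.rcos_const_imp_mem[OF a_carr] a(2) by blast
  then have "N +> a \<in> Units (R Quot N)" using K.field_Units ha zero by simp
  then obtain Y where Y: "Y \<in> carrier (R Quot N)" "(N +> a) \<otimes>\<^bsub>R Quot N\<^esub> Y = \<one>\<^bsub>R Quot N\<^esub>"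
    using K.Units_inv_closed K.Units_r_inv by blast
  obtain b where b: "b \<in> carrier R" "Y = N +> b"
    using Y(1) unfolding FactRing_def A_RCOSETS_def' by auto
  obtain p where "p \<noteq> []" "set p \<subseteq> S" "hd p = \<one>" and p_root: "eval p b = \<zero>"
    using int[OF b(1)] unfolding integral_over_def by blast
  from \<open>p \<noteq> []\<close> \<open>hd p = \<one>\<close> \<open>set p \<subseteq> S\<close> obtain q where p: "p = \<one> # q" "set q \<subseteq> S"
    by (cases p) auto
  have p_carr: "set p \<subseteq> carrier R" using p(1,2) S_carr by auto
  have hp_carr: "set (map ((+>) N) p) \<subseteq> carrier (R Quot N)" using p_carr h.hom_closed by auto
  have "(N +> a) \<otimes>\<^bsub>R Quot N\<^esub> (N +> eval (rev p) a)
      = (N +> a) [^]\<^bsub>R Quot N\<^esub> length p \<otimes>\<^bsub>R Quot N\<^esub> (N +> eval p b)"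
    using K.pow_length_mult_eval[OF ha Y(1) Y(2) hp_carr] b(2)
      h.eval_hom'[OF a_carr] h.eval_hom'[OF b(1) p_carr] p_carr by (simp add: rev_map)
  also have "\<dots> = \<zero>\<^bsub>R Quot N\<^esub>" using p_root ha by simp
  finally have "(N +> a) \<otimes>\<^bsub>R Quot N\<^esub> (N +> eval (rev p) a) = \<zero>\<^bsub>R Quot N\<^esub>" .
  moreover have e_carr: "eval (rev p) a \<in> carrier R" using eval_in_carrier p_carr a_carr by simp
  ultimately have "N +> eval (rev p) a = N"
    using K.integral_iff[OF ha h.hom_closed[OF e_carr]] a_nz zero by simp
  then have "eval (rev p) a \<in> N" by (rule N.rcos_const_imp_mem[OF e_carr])
  define a' where "a' = \<ominus> eval (rev q) a"
  have q_a: "eval (rev q) a \<in> S" using eval_in_subring[OF S] p(2) a(1) by simp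
  have e: "eval (rev q) a \<in> carrier R" using q_a S_carr by blast
  have "eval (rev p) a = eval (rev q) a \<otimes> a \<oplus> \<one>"
    using eval_append_aux[of "rev q" \<one> a] p(1,2) S_carr a_carr by auto
  then have "a \<otimes> a' \<ominus> \<one> = \<ominus> eval (rev p) a"
    unfolding a'_def a_minus_def using e a_carr by (simp add: r_minus minus_add m_comm)
  with \<open>eval (rev p) a \<in> N\<close> have "a \<otimes> a' \<ominus> \<one> \<in> N" by simp
  then show ?thesis using subringE(5)[OF S q_a] unfolding a'_def by blast
qed

lemma (in cring) maximalideal_inter_integral_subring:
  assumes S: "subring S R" and int: "\<And>b. b \<in> carrier R \<Longrightarrow> integral_over R S b"
    and N: "maximalideal N R"
  shows "maximalideal (N \<inter> S) (R\<lparr>carrier := S\<rparr>)"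
proof -
  interpret N: maximalideal N R by fact
  have "\<one> \<notin> N" using N.one_imp_carrier N.I_notcarr by blast
  show ?thesis
  proof (rule maximalidealI)
    show "ideal (N \<inter> S) (R\<lparr>carrier := S\<rparr>)" by (rule ideal_inter_subring[OF N.is_ideal S])
    show "carrier (R\<lparr>carrier := S\<rparr>) \<noteq> N \<inter> S" using \<open>\<one> \<notin> N\<close> subringE(3)[OF S] by auto
  next
    fix J assume J: "ideal J (R\<lparr>carrier := S\<rparr>)" "N \<inter> S \<subseteq> J" "J \<subseteq> carrier (R\<lparr>carrier := S\<rparr>)"
    interpret J: ideal J "R\<lparr>carrier := S\<rparr>" by (fact J(1))
    show "J = N \<inter> S \<or> J = carrier (R\<lparr>carrier := S\<rparr>)"
    proof (cases "J \<subseteq> N")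
      case True then show ?thesis using J by auto
    next
      case False
      then obtain a where a: "a \<in> J" "a \<notin> N" by blast
      have aS: "a \<in> S" using a(1) J(3) by auto
      obtain a' where a': "a' \<in> S" "a \<otimes> a' \<ominus> \<one> \<in> N"
        using integral_inverse_mod_maximalideal[OF S int N aS a(2)] by blast
      have carr: "a \<in> carrier R" "a' \<in> carrier R" using aS a'(1) subringE(1)[OF S] by auto
      have d_S: "a \<otimes> a' \<ominus> \<one> \<in> S"
        unfolding a_minus_def using subringE(3,5,6,7)[OF S] aS a'(1) by blast
      have "a \<otimes> a' \<in> J" using J.I_r_closed[OF a(1)] a'(1) by simp
      moreover have "\<ominus> (a \<otimes> a' \<ominus> \<one>) \<in> J"
        using J.a_inv_closed[of "a \<otimes> a' \<ominus> \<one>"] subring_a_inv[OF S d_S] J(2) a'(2) d_S by auto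
      ultimately have "a \<otimes> a' \<oplus> \<ominus> (a \<otimes> a' \<ominus> \<one>) \<in> J"
        using additive_subgroup.a_closed[OF J.is_additive_subgroup] by simp
      moreover have "a \<otimes> a' \<oplus> \<ominus> (a \<otimes> a' \<ominus> \<one>) = \<one>"
        using carr by (simp add: a_minus_def minus_add a_assoc[symmetric] r_neg)
      ultimately have "\<one> \<in> J" by simp
      then have "J = carrier (R\<lparr>carrier := S\<rparr>)" by (intro J.one_imp_carrier) simp
      then show ?thesis by blast
    qed
  qed
qed

lemma (in ring) jacobson_radical_ideal: "ideal (jacobson_radical R) R"
proof (cases "\<exists>N. maximalideal N R")
  case False
  then have "jacobson_radical R = carrier R" unfolding jacobson_radical_def by blast
  then show ?thesis using oneideal by simp
next
  case True
  then obtain N where N: "maximalideal N R" by blast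
  have ideals: "ideal M R" if "M \<in> {N. maximalideal N R}" for M
    using that maximalideal.axioms(1) by blast
  have "\<Inter>{N. maximalideal N R} \<subseteq> carrier R"
    using N ideal.Icarr[OF ideals] by blast
  then have "jacobson_radical R = \<Inter>{N. maximalideal N R}"
    unfolding jacobson_radical_def by blast
  moreover have "{N. maximalideal N R} \<noteq> {}" using N by blast
  then have "ideal (\<Inter>{N. maximalideal N R}) R" using ideals by (intro i_Intersect) auto
  ultimately show ?thesis by simp
qed

lemma (in cring) one_add_jacobson_radical_Units:
  assumes "s \<in> jacobson_radical R"
  shows "\<one> \<oplus> s \<in> Units R"
proof (rule ccontr)
  have s: "s \<in> carrier R" using assms unfolding jacobson_radical_def by blast
  assume "\<one> \<oplus> s \<notin> Units R"
  then obtain N where N: "maximalideal N R" "\<one> \<oplus> s \<in> N"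
    using nonunit_mem_maximalideal s by blast
  interpret N: maximalideal N R by (fact N(1))
  have "s \<in> N" using assms N(1) unfolding jacobson_radical_def by blast
  then have "(\<one> \<oplus> s) \<oplus> \<ominus> s \<in> N" using N(2) by simp
  moreover have "(\<one> \<oplus> s) \<oplus> \<ominus> s = \<one>" using s by (simp add: a_assoc r_neg)
  ultimately have "\<one> \<in> N" by simp
  then show False using N.one_imp_carrier N.I_notcarr by blast
qed

locale local_integral_extension = cring R for R (structure) +
  fixes A m :: "'a set"
  assumes integral_extension: "integral_extension R A"
    and local_A: "local_ring_with (R\<lparr>carrier := A\<rparr>) m"
begin

abbreviation Rad :: "'a set" where "Rad \<equiv> jacobson_radical R"

abbreviation A' :: "'a set" where "A' \<equiv> A <+> Rad"

lemma subring_A: "subring A R"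
  using integral_extension unfolding integral_extension_def by (rule conjunct1)

lemma integral_over_A: "b \<in> carrier R \<Longrightarrow> integral_over R A b"
  using integral_extension unfolding integral_extension_def by blast

lemma A_carr: "A \<subseteq> carrier R"
  by (rule subringE(1)[OF subring_A])

lemma maximalideal_m: "maximalideal m (R\<lparr>carrier := A\<rparr>)"
  using local_A unfolding local_ring_with_def by (elim conjE)

lemma maximalideal_A_eq_m: "maximalideal n (R\<lparr>carrier := A\<rparr>) \<Longrightarrow> n = m"
  using local_A unfolding local_ring_with_def by blast

lemma m_subset_A: "m \<subseteq> A"
  using additive_subgroup.a_subset[OF ideal.axioms(1)[OF maximalideal.axioms(1)[OF maximalideal_m]]] by simp

lemma one_notin_m: "\<one> \<notin> m"
  using maximalideal.I_notcarr[OF maximalideal_m]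
    ideal.one_imp_carrier[OF maximalideal.axioms(1)[OF maximalideal_m]] by auto

lemma exists_maximalideal: "\<exists>N. maximalideal N R"
proof -
  have "\<zero> \<in> m"
    using additive_subgroup.zero_closed[OF ideal.axioms(1)[OF maximalideal.axioms(1)[OF maximalideal_m]]] by simp
  then have "\<one> \<notin> {\<zero>}" using one_notin_m by auto
  then show ?thesis using ideal_subset_maximalideal[OF zeroideal] by blast
qed

lemma maximalideal_inter_A: "maximalideal N R \<Longrightarrow> N \<inter> A = m"
  using maximalideal_A_eq_m maximalideal_inter_integral_subring[OF subring_A integral_over_A] by blast

lemma A_inter_Rad: "A \<inter> Rad = m"
proof
  obtain N where N: "maximalideal N R" using exists_maximalideal by blast
  show "A \<inter> Rad \<subseteq> m"
    using maximalideal_inter_A[OF N] N unfolding jacobson_radical_def by blast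
  show "m \<subseteq> A \<inter> Rad"
    using maximalideal_inter_A m_subset_A A_carr unfolding jacobson_radical_def by blast
qed

lemma one_notin_Rad: "\<one> \<notin> Rad"
  using A_inter_Rad one_notin_m subringE(3)[OF subring_A] by blast

lemma subring_A': "subring A' R"
  by (rule subring_set_add_ideal[OF subring_A jacobson_radical_ideal])

lemma A_subset_A': "A \<subseteq> A'"
  using A_carr additive_subgroup.zero_closed[OF ideal.axioms(1)[OF jacobson_radical_ideal]]
  unfolding set_add_def' by (force intro: r_zero[symmetric])

lemma Rad_subset_A': "Rad \<subseteq> A'"
  using subringE(2)[OF subring_A] ideal.Icarr[OF jacobson_radical_ideal]
  unfolding set_add_def' by (force intro: l_zero[symmetric])

lemma ideal_Rad_A': "ideal Rad (R\<lparr>carrier := A'\<rparr>)"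
  using ideal_inter_subring[OF jacobson_radical_ideal subring_A'] Rad_subset_A'
  by (simp add: Int_absorb2)

text \<open>For \<open>a \<in> A - m\<close> with inverse \<open>a'\<close> in \<open>A\<close> and \<open>r \<in> R(B)\<close>, \<open>(a + r) a' = 1 + s\<close> with
  \<open>s = r a' \<in> R(B)\<close>; the inverse \<open>u\<close> of \<open>1 + s\<close> lies in \<open>A'\<close> because \<open>u = 1 - s u\<close>.\<close>
lemma A'_nonmember_Rad_invertible:
  assumes "x \<in> A'" "x \<notin> Rad"
  shows "\<exists>y\<in>A'. x \<otimes> y = \<one>"
proof -
  interpret Rad: ideal Rad R by (rule jacobson_radical_ideal)
  obtain a r where ar: "a \<in> A" "r \<in> Rad" "x = a \<oplus> r"
    using assms(1) unfolding set_add_def' by blast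
  have carr: "a \<in> carrier R" "r \<in> carrier R" using ar A_carr Rad.Icarr by auto
  have "a \<notin> m" using ar assms(2) A_inter_Rad Rad.a_closed by blast
  then have "a \<in> Units (R\<lparr>carrier := A\<rparr>)"
    using local_ring_with_nonmember_unit[OF local_A] ar(1) by simp
  then obtain a' where a': "a' \<in> A" "a \<otimes> a' = \<one>" unfolding Units_def by auto
  have a'_carr: "a' \<in> carrier R" using a'(1) A_carr by blast
  define s where "s = r \<otimes> a'"
  have s: "s \<in> Rad" "s \<in> carrier R" unfolding s_def using Rad.I_r_closed ar(2) a'_carr carr by auto
  have x_a': "x \<otimes> a' = \<one> \<oplus> s" unfolding s_def ar(3) using carr a'_carr a'(2) by (simp add: l_distr)
  obtain u where u: "u \<in> carrier R" "(\<one> \<oplus> s) \<otimes> u = \<one>"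
    using one_add_jacobson_radical_Units[OF s(1)] unfolding Units_def by auto
  have "u = \<one> \<oplus> \<ominus> (s \<otimes> u)"
  proof -
    have "\<one> \<oplus> \<ominus> (s \<otimes> u) = (u \<oplus> s \<otimes> u) \<oplus> \<ominus> (s \<otimes> u)" using u s by (simp add: l_distr)
    also have "\<dots> = u" using u s by (simp add: a_assoc r_neg)
    finally show ?thesis by simp
  qed
  moreover have "\<ominus> (s \<otimes> u) \<in> Rad" using Rad.I_r_closed[OF s(1) u(1)] by simp
  ultimately have "u \<in> A'" using subringE(3)[OF subring_A] unfolding set_add_def' by blast
  then have "a' \<otimes> u \<in> A'" using subringE(6)[OF subring_A'] A_subset_A' a'(1) by blast
  moreover have "x \<otimes> (a' \<otimes> u) = \<one>"
    using x_a' u a'_carr carr ar(3) by (simp add: m_assoc[symmetric])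
  ultimately show ?thesis by blast
qed

lemma local_A': "local_ring_with (R\<lparr>carrier := A'\<rparr>) Rad"
  by (rule local_ring_with_subringI[OF subring_A' ideal_Rad_A' one_notin_Rad A'_nonmember_Rad_invertible])

lemma res_map_Rad_ring_iso:
  "res_map R Rad \<in> ring_iso (R\<lparr>carrier := A\<rparr> Quot m) (R\<lparr>carrier := A'\<rparr> Quot Rad)"
  using res_map_ring_iso[OF subring_A jacobson_radical_ideal] A_inter_Rad by simp

lemma intermediate_local_subset_A':
  assumes C: "subring C R" and A_C: "A \<subseteq> C" and local_C: "local_ring_with (R\<lparr>carrier := C\<rparr>) n"
    and iso: "res_map R n \<in> ring_iso (R\<lparr>carrier := A\<rparr> Quot m) (R\<lparr>carrier := C\<rparr> Quot n)"
  shows "C \<subseteq> A'"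
proof
  interpret Rad: ideal Rad R by (rule jacobson_radical_ideal)
  have n_max: "maximalideal n (R\<lparr>carrier := C\<rparr>)"
    using local_C unfolding local_ring_with_def by (elim conjE)
  have n_unique: "\<And>k. maximalideal k (R\<lparr>carrier := C\<rparr>) \<Longrightarrow> k = n"
    using local_C unfolding local_ring_with_def by blast
  interpret n: ideal n "R\<lparr>carrier := C\<rparr>" by (rule maximalideal.axioms(1)[OF n_max])
  have n_C: "n \<subseteq> C" using n.a_subset by simp
  have C_carr: "C \<subseteq> carrier R" by (rule subringE(1)[OF C])
  have int_C: "\<And>b. b \<in> carrier R \<Longrightarrow> integral_over R C b"
    using integral_over_mono[OF integral_over_A A_C] .
  have "n \<subseteq> N" if "maximalideal N R" for N
  proof -
    have "N \<inter> C = n" by (rule n_unique[OF maximalideal_inter_integral_subring[OF C int_C that]])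
    then show ?thesis by blast
  qed
  then have n_Rad: "n \<subseteq> Rad" using n_C C_carr unfolding jacobson_radical_def by blast
  fix c assume c: "c \<in> C"
  have "res_map R n ` carrier (R\<lparr>carrier := A\<rparr> Quot m) = carrier (R\<lparr>carrier := C\<rparr> Quot n)"
    using iso unfolding ring_iso_def bij_betw_def by (elim CollectE conjE)
  moreover have "n +> c \<in> carrier (R\<lparr>carrier := C\<rparr> Quot n)"
    using c unfolding carrier_FactRing_carrier_update by (rule imageI)
  ultimately obtain a where a: "a \<in> A" "res_map R n (m +> a) = n +> c"
    unfolding carrier_FactRing_carrier_update by (metis imageE)
  have "c = \<zero> \<oplus> c" "\<zero> \<in> n"
    using c C_carr additive_subgroup.zero_closed[OF n.is_additive_subgroup] by auto
  then have "c \<in> n +> c" unfolding a_r_coset_def' by blast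
  then obtain i j where ij: "i \<in> n" "j \<in> m" "c = i \<oplus> (j \<oplus> a)"
    using a(2) unfolding res_map_def set_add_def' a_r_coset_def' by blast
  have "i \<in> carrier R" "j \<in> carrier R" "a \<in> carrier R"
    using ij n_C C_carr m_subset_A A_carr a(1) by auto
  then have "c = a \<oplus> (i \<oplus> j)" using ij(3) by (simp add: a_ac)
  moreover have "i \<oplus> j \<in> Rad" using ij n_Rad A_inter_Rad Rad.a_closed by blast
  ultimately show "c \<in> A'" using a(1) unfolding set_add_def' by blast
qed

lemma m_eq_A_inter: "maximalideal N R \<Longrightarrow> m = A \<inter> N"
  using maximalideal_inter_A by blast

lemma res_map_residue:
  assumes "maximalideal N R" "a \<in> A"
  shows "res_map R N (m +> a) = N +> a"
  using res_map_inter_rcos[OF maximalideal.axioms(1)[OF assms(1)] subring_A assms(2)]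
  unfolding m_eq_A_inter[OF assms(1)] .

lemma inj_on_res_map:
  "maximalideal N R \<Longrightarrow> inj_on (res_map R N) (carrier (R\<lparr>carrier := A\<rparr> Quot m))"
  using res_map_inj_on[OF subring_A maximalideal.axioms(1)] m_eq_A_inter by metis

lemma the_inv_res_map:
  assumes "maximalideal N R" "a \<in> A"
  shows "the_inv_into (carrier (R\<lparr>carrier := A\<rparr> Quot m)) (res_map R N) (N +> a) = m +> a"
  using the_inv_into_f_eq[OF inj_on_res_map[OF assms(1)] res_map_residue[OF assms]] assms(2)
  unfolding carrier_FactRing_carrier_update by blast

lemma rcos_in_image_res_map_iff:
  assumes "maximalideal N R"
  shows "N +> b \<in> res_map R N ` carrier (R\<lparr>carrier := A\<rparr> Quot m) \<longleftrightarrow> (\<exists>a\<in>A. N +> b = N +> a)"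
  using res_map_residue[OF assms] unfolding carrier_FactRing_carrier_update by auto

lemma mem_A'_iff_congruent:
  assumes b: "b \<in> carrier R"
  shows "b \<in> A' \<longleftrightarrow> (\<exists>a\<in>A. \<forall>N. maximalideal N R \<longrightarrow> N +> b = N +> a)"
proof -
  have "b \<in> A' \<longleftrightarrow> (\<exists>a\<in>A. b \<ominus> a \<in> Rad)"
  proof
    assume "b \<in> A'"
    then obtain a r where ar: "a \<in> A" "r \<in> Rad" "b = a \<oplus> r" unfolding set_add_def' by blast
    have "a \<in> carrier R" "r \<in> carrier R"
      using ar A_carr ideal.Icarr[OF jacobson_radical_ideal] by auto
    then have "b \<ominus> a = r" using ar(3) by (simp add: a_minus_def) algebra
    then show "\<exists>a\<in>A. b \<ominus> a \<in> Rad" using ar(1,2) by blast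
  next
    assume "\<exists>a\<in>A. b \<ominus> a \<in> Rad"
    then obtain a where a: "a \<in> A" "b \<ominus> a \<in> Rad" by blast
    have "a \<in> carrier R" using A_carr a(1) by blast
    then have "b = a \<oplus> (b \<ominus> a)" using b by (simp add: a_minus_def) algebra
    then show "b \<in> A'" using a unfolding set_add_def' by blast
  qed
  also have "\<dots> \<longleftrightarrow> (\<exists>a\<in>A. \<forall>N. maximalideal N R \<longrightarrow> N +> b = N +> a)"
    using quotient_eq_iff_same_a_r_cos[OF maximalideal.axioms(1)] b A_carr
    unfolding jacobson_radical_def by (auto simp: minus_closed subset_iff)
  finally show ?thesis .
qed

lemma mem_A'_iff:
  assumes b: "b \<in> carrier R"
  shows "b \<in> A' \<longleftrightarrow>
       ((\<forall>n. maximalideal n R \<longrightarrow> n +> b \<in> res_map R n ` carrier (R\<lparr>carrier := A\<rparr> Quot m))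
        \<and> (\<forall>n1 n2. maximalideal n1 R \<longrightarrow> maximalideal n2 R \<longrightarrow>
            the_inv_into (carrier (R\<lparr>carrier := A\<rparr> Quot m)) (res_map R n1) (n1 +> b)
            = the_inv_into (carrier (R\<lparr>carrier := A\<rparr> Quot m)) (res_map R n2) (n2 +> b)))"
    (is "_ \<longleftrightarrow> ?in_image \<and> ?agree")
proof
  assume "b \<in> A'"
  then obtain a where a: "a \<in> A" "\<And>N. maximalideal N R \<Longrightarrow> N +> b = N +> a"
    using mem_A'_iff_congruent[OF b] by blast
  have ?in_image using a rcos_in_image_res_map_iff by blast
  moreover have ?agree using a the_inv_res_map by simp
  ultimately show "?in_image \<and> ?agree" ..
next
  assume cond: "?in_image \<and> ?agree"
  obtain N0 where N0: "maximalideal N0 R" using exists_maximalideal by blast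
  obtain a where a: "a \<in> A" "N0 +> b = N0 +> a"
    using cond N0 rcos_in_image_res_map_iff by blast
  have "N +> b = N +> a" if N: "maximalideal N R" for N
  proof -
    obtain a' where a': "a' \<in> A" "N +> b = N +> a'"
      using cond N rcos_in_image_res_map_iff by blast
    have "the_inv_into (carrier (R\<lparr>carrier := A\<rparr> Quot m)) (res_map R N) (N +> b)
        = the_inv_into (carrier (R\<lparr>carrier := A\<rparr> Quot m)) (res_map R N0) (N0 +> b)"
      using cond N N0 by blast
    then have "m +> a' = m +> a"
      unfolding a'(2) a(2) the_inv_res_map[OF N a'(1)] the_inv_res_map[OF N0 a(1)] .
    then have "res_map R N (m +> a') = res_map R N (m +> a)" by simp
    then show ?thesis unfolding a'(2) res_map_residue[OF N a'(1)] res_map_residue[OF N a(1)] .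
  qed
  then show "b \<in> A'" using mem_A'_iff_congruent[OF b] a(1) by blast
qed

end

theorem mainTheorem1:
  fixes B :: "('a, 'c) ring_scheme" and A m :: "'a set"
  assumes "cring B"
    and "integral_extension B A"
    and "local_ring_with (B\<lparr>carrier := A\<rparr>) m"
  shows
    "(local_ring_with (B\<lparr>carrier := A <+>\<^bsub>B\<^esub> jacobson_radical B\<rparr>) (jacobson_radical B)
      \<and> res_map B (jacobson_radical B) \<in>
         ring_iso ((B\<lparr>carrier := A\<rparr>) Quot m)
                  ((B\<lparr>carrier := A <+>\<^bsub>B\<^esub> jacobson_radical B\<rparr>) Quot (jacobson_radical B)))
     \<and> (\<forall>C n. subring C B \<longrightarrow> A \<subseteq> C \<longrightarrow> local_ring_with (B\<lparr>carrier := C\<rparr>) n \<longrightarrow>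
       res_map B n \<in> ring_iso ((B\<lparr>carrier := A\<rparr>) Quot m) ((B\<lparr>carrier := C\<rparr>) Quot n) \<longrightarrow>
       C \<subseteq> A <+>\<^bsub>B\<^esub> jacobson_radical B)
     \<and> (\<forall>b \<in> carrier B.
       b \<in> A <+>\<^bsub>B\<^esub> jacobson_radical B \<longleftrightarrow>
       ((\<forall>n. maximalideal n B \<longrightarrow>
            n +>\<^bsub>B\<^esub> b \<in> res_map B n ` carrier ((B\<lparr>carrier := A\<rparr>) Quot m))
        \<and> (\<forall>n1 n2. maximalideal n1 B \<longrightarrow> maximalideal n2 B \<longrightarrow>
            the_inv_into (carrier ((B\<lparr>carrier := A\<rparr>) Quot m)) (res_map B n1) (n1 +>\<^bsub>B\<^esub> b)
            = the_inv_into (carrier ((B\<lparr>carrier := A\<rparr>) Quot m)) (res_map B n2) (n2 +>\<^bsub>B\<^esub> b))))"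
proof -
  interpret local_integral_extension B A m
    using assms by (intro local_integral_extension.intro local_integral_extension_axioms.intro)
  have "\<forall>C n. subring C B \<longrightarrow> A \<subseteq> C \<longrightarrow> local_ring_with (B\<lparr>carrier := C\<rparr>) n \<longrightarrow>
      res_map B n \<in> ring_iso ((B\<lparr>carrier := A\<rparr>) Quot m) ((B\<lparr>carrier := C\<rparr>) Quot n) \<longrightarrow> C \<subseteq> A'"
    using intermediate_local_subset_A' by blast
  then show ?thesis using local_A' res_map_Rad_ring_iso mem_A'_iff by (intro conjI ballI)
qed

end
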